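(* Let $m=2^p>2$ and $r_1,\dots,r_m\in\{1,\dots,m\}$ (repetitions allowed) with $b(r_1-1)\oplus\dots\oplus b(r_m-1)=0$, and let $A$ be the $m\times m$ matrix whose $i$-th row is the $r_i$-th row of $H(m)$. Fix an index $i$ and some $r'_i\in\{1,\dots,m\}$ with $r'_i\neq r_i$, and let $B$ be obtained from $A$ by replacing its $i$-th row with the $r'_i$-th row of $H(m)$. Then the row indices of $B$ have nonzero XOR, i.e. $b(r_1-1)\oplus\dots\oplus b(r'_i-1)\oplus\dots\oplus b(r_m-1)\neq0$, and hence $\mathrm{perm}\,B=0$.
   Context: For $m=2^p$, the Sylvester matrix $H(m)$ is defined recursively by $H(1)=[1]$ and $H(2^p)=\begin{bmatrix}H(2^{p-1})&H(2^{p-1})\\ H(2^{p-1})&-H(2^{p-1})\end{bmatrix}$, rows and columns indexed $1,\dots,m$. Here $b(x)$ denotes the $p$-bit binary representation of $x\in\{0,\dots,m-1\}$ and $\oplus$ is bitwise XOR. $\mathrm{perm}\,A=\sum_{\sigma\in S_m}\prod_{i=1}^m a_{i,\sigma(i)}$. *)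

theory Defs
  imports Main "HOL-Combinatorics.Permutations"
begin

text \<open>Sylvester matrix H(2^p), 0-indexed entries: sylv0 p i j for i, j < 2^p,
  defined by the block recursion H(2^(p+1)) = [[H, H], [H, -H]].\<close>
fun sylv0 :: "nat \<Rightarrow> nat \<Rightarrow> nat \<Rightarrow> int" where
  "sylv0 0 i j = 1"
| "sylv0 (Suc p) i j =
     (let h = 2 ^ p in
      if i < h \<and> j < h then sylv0 p i j
      else if i < h then sylv0 p i (j - h)
      else if j < h then sylv0 p (i - h) j
      else - sylv0 p (i - h) (j - h))"

definition sylvester :: "nat \<Rightarrow> nat \<Rightarrow> nat \<Rightarrow> int" where
  "sylvester p i j = sylv0 p (i - 1) (j - 1)"

definition perm_mat :: "nat \<Rightarrow> (nat \<Rightarrow> nat \<Rightarrow> int) \<Rightarrow> int" where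
  "perm_mat m A = (\<Sum>\<sigma> | \<sigma> permutes {1..m}. \<Prod>i = 1..m. A i (\<sigma> i))"

definition xor_rows :: "nat \<Rightarrow> (nat \<Rightarrow> nat) \<Rightarrow> nat" where
  "xor_rows m r = foldr (\<lambda>k acc. xor (r k - 1) acc) [1..<m+1] 0"

end

theory Submission
  imports Defs
begin

text \<open>The entry of H(2^p) in row i+1, column j+1 is the character
  (-1)^(number of common bits of i and j), which is multiplicative in each index under XOR.
  If the XOR s of the row indices is nonzero, pick a bit b of s and shift every column
  index by XOR with 2^b: each row's entry gets multiplied by the character of its index at
  2^b, and the product of these signs is the character of s at 2^b, which is -1.
  Precomposing with this column permutation is a bijection on the permutations that
  negates every summand of the permanent, so the permanent vanishes.\<close>

definition walsh :: "nat \<Rightarrow> nat \<Rightarrow> nat \<Rightarrow> int" where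
  "walsh p i j = (\<Prod>b<p. if bit i b \<and> bit j b then -1 else 1)"

lemma bit_diff_exp:
  fixes i :: nat
  assumes "2 ^ p \<le> i" "i < 2 ^ Suc p" "b < p"
  shows "bit (i - 2 ^ p) b = bit i b"
proof -
  have "i - 2 ^ p = i mod 2 ^ p" using assms by (simp add: le_mod_geq)
  then show ?thesis using assms by (simp add: bit_take_bit_iff flip: take_bit_eq_mod)
qed

lemma bit_top_iff:
  fixes i :: nat
  assumes "i < 2 ^ Suc p"
  shows "bit i p \<longleftrightarrow> 2 ^ p \<le> i"
proof -
  have "i div 2 ^ p < 2" using assms by (simp add: less_mult_imp_div_less mult.commute)
  moreover have "0 < i div 2 ^ p \<longleftrightarrow> 2 ^ p \<le> i" by (simp add: div_greater_zero_iff)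
  ultimately show ?thesis by (auto simp: bit_iff_odd)
qed

lemma walsh_Suc:
  "walsh (Suc p) i j = walsh p i j * (if bit i p \<and> bit j p then -1 else 1)"
  by (simp add: walsh_def)

lemma walsh_diff_exp_left:
  "2 ^ p \<le> i \<Longrightarrow> i < 2 ^ Suc p \<Longrightarrow> walsh p (i - 2 ^ p) j = walsh p i j"
  unfolding walsh_def by (intro prod.cong) (auto simp: bit_diff_exp)

lemma walsh_diff_exp_right:
  "2 ^ p \<le> j \<Longrightarrow> j < 2 ^ Suc p \<Longrightarrow> walsh p i (j - 2 ^ p) = walsh p i j"
  unfolding walsh_def by (intro prod.cong) (auto simp: bit_diff_exp)

lemma sylv0_eq_walsh: "i < 2 ^ p \<Longrightarrow> j < 2 ^ p \<Longrightarrow> sylv0 p i j = walsh p i j"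
proof (induction p arbitrary: i j)
  case 0
  then show ?case by (simp add: walsh_def)
next
  case (Suc p)
  have i: "bit i p \<longleftrightarrow> 2 ^ p \<le> i" and j: "bit j p \<longleftrightarrow> 2 ^ p \<le> j"
    using bit_top_iff Suc.prems by blast+
  have i': "i - 2 ^ p < 2 ^ p" and j': "j - 2 ^ p < 2 ^ p" using Suc.prems by auto
  show ?case
  proof (cases "2 ^ p \<le> i"; cases "2 ^ p \<le> j")
    assume "2 ^ p \<le> i" "2 ^ p \<le> j"
    then show ?thesis
      using Suc.IH[OF i' j'] walsh_diff_exp_left[of p i] walsh_diff_exp_right[of p j] Suc.prems
      by (simp add: walsh_Suc i j)
  next
    assume "2 ^ p \<le> i" "\<not> 2 ^ p \<le> j"
    then show ?thesis
      using Suc.IH[OF i'] walsh_diff_exp_left[of p i] Suc.prems by (simp add: walsh_Suc i j)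
  next
    assume "\<not> 2 ^ p \<le> i" "2 ^ p \<le> j"
    then show ?thesis
      using Suc.IH[OF _ j'] walsh_diff_exp_right[of p j] Suc.prems by (simp add: walsh_Suc i j)
  next
    assume "\<not> 2 ^ p \<le> i" "\<not> 2 ^ p \<le> j"
    then show ?thesis using Suc.IH by (simp add: walsh_Suc i j)
  qed
qed

lemma walsh_xor_left: "walsh p (xor a b) c = walsh p a c * walsh p b c"
  unfolding walsh_def by (simp add: prod.distrib[symmetric] bit_xor_iff) (intro prod.cong, auto)

lemma walsh_xor_right: "walsh p a (xor b c) = walsh p a b * walsh p a c"
  unfolding walsh_def by (simp add: prod.distrib[symmetric] bit_xor_iff) (intro prod.cong, auto)

lemma walsh_exp_eq_neg:
  assumes "bit s b" "b < p"
  shows "walsh p s (2 ^ b) = -1"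
proof -
  have "walsh p s (2 ^ b) = (\<Prod>b'<p. if b' = b then -1 else 1)"
    unfolding walsh_def by (intro prod.cong) (auto simp: bit_exp_iff assms(1))
  also have "\<dots> = -1" using assms(2) by (simp add: prod.delta)
  finally show ?thesis .
qed

lemma exists_walsh_eq_neg:
  fixes s :: nat
  assumes "s \<noteq> 0" "s < 2 ^ p"
  obtains c where "c < 2 ^ p" "walsh p s c = -1"
proof -
  obtain b where b: "bit s b"
    using assms(1) bit_eq_iff[of s 0] by auto
  have "b < p"
  proof (rule ccontr)
    assume "\<not> b < p"
    then have "s < 2 ^ b" using assms(2) power_increasing[of p b "2::nat"] by linarith
    then show False using b by (simp add: bit_iff_odd)
  qed
  then show ?thesis by (intro that[of "2 ^ b"]) (simp_all add: walsh_exp_eq_neg[OF b])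
qed

lemma xor_less_exp: "(a::nat) < 2 ^ p \<Longrightarrow> b < 2 ^ p \<Longrightarrow> xor a b < 2 ^ p"
  by (metis take_bit_nat_eq_self_iff take_bit_xor)

lemma xor_cancel_left: "xor a (xor a x) = (x::nat)"
  by (simp flip: xor.assoc)

lemma walsh_xor_rows: "walsh p (xor_rows m r) c = (\<Prod>k = 1..m. walsh p (r k - 1) c)"
proof -
  have "walsh p (foldr (\<lambda>k acc. xor (r k - 1) acc) xs 0) c
      = (\<Prod>k\<leftarrow>xs. walsh p (r k - 1) c)" for xs
    by (induction xs) (simp_all add: walsh_def[of p 0] walsh_xor_left)
  moreover have "set [1..<m+1] = {1..m}" by auto
  ultimately show ?thesis
    unfolding xor_rows_def by (metis distinct_upt prod.distinct_set_conv_list)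
qed

lemma xor_rows_less_exp:
  assumes "\<forall>k \<in> {1..m}. r k - 1 < 2 ^ p"
  shows "xor_rows m r < 2 ^ p"
proof -
  have "\<forall>k \<in> set xs. r k - 1 < 2 ^ p \<Longrightarrow> foldr (\<lambda>k acc. xor (r k - 1) acc) xs 0 < 2 ^ p" for xs
    by (induction xs) (auto intro: xor_less_exp)
  then show ?thesis unfolding xor_rows_def using assms by (simp del: upt_Suc)
qed

lemma xor_rows_fun_upd:
  assumes "i \<in> {1..m}"
  shows "xor_rows m (r(i := v)) = xor (xor (xor_rows m r) (r i - 1)) (v - 1)"
proof -
  have "distinct xs \<Longrightarrow> foldr (\<lambda>k acc. xor ((r(i := v)) k - 1) acc) xs 0 =
     (if i \<in> set xs then xor (xor (foldr (\<lambda>k acc. xor (r k - 1) acc) xs 0) (r i - 1)) (v - 1)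
      else foldr (\<lambda>k acc. xor (r k - 1) acc) xs 0)" for xs
    by (induction xs) (auto simp: ac_simps xor_cancel_left)
  from this[of "[1..<m+1]"] show ?thesis using assms unfolding xor_rows_def by auto
qed

lemma perm_mat_eq_0_if_column_permutation_negates:
  assumes g: "g permutes {1..m}"
    and scale: "\<And>k j. k \<in> {1..m} \<Longrightarrow> j \<in> {1..m} \<Longrightarrow> A k (g j) = e k * A k j"
    and sign: "(\<Prod>k = 1..m. e k) = -1"
  shows "perm_mat m A = 0"
proof -
  define summand where "summand \<sigma> = (\<Prod>k = 1..m. A k (\<sigma> k))" for \<sigma> :: "nat \<Rightarrow> nat"
  have summand_comp: "summand (g \<circ> \<sigma>) = - summand \<sigma>" if "\<sigma> permutes {1..m}" for \<sigma>
  proof -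
    have "summand (g \<circ> \<sigma>) = (\<Prod>k = 1..m. e k * A k (\<sigma> k))"
      unfolding summand_def using scale permutes_in_image[OF that] by (intro prod.cong) auto
    also have "\<dots> = - summand \<sigma>" by (simp only: prod.distrib sign summand_def mult_minus1)
    finally show ?thesis .
  qed
  have "perm_mat m A = (\<Sum>\<sigma> | \<sigma> permutes {1..m}. summand (g \<circ> \<sigma>))"
    unfolding perm_mat_def summand_def by (rule setum_permutations_compose_left[OF g])
  also have "\<dots> = (\<Sum>\<sigma> | \<sigma> permutes {1..m}. - summand \<sigma>)"
    by (rule sum.cong) (simp_all add: summand_comp)
  also have "\<dots> = - perm_mat m A"
    unfolding perm_mat_def summand_def by (rule sum_negf)
  finally show ?thesis by simp
qed

lemma xor_shift_mem:
  fixes c :: nat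
  assumes "j \<in> {1..2 ^ p}" "c < 2 ^ p"
  shows "xor (j - 1) c + 1 \<in> {1..2 ^ p}"
  using assms xor_less_exp[of "j - 1" p c] by (auto simp: Suc_le_eq)

lemma xor_shift_permutes:
  fixes c :: nat
  assumes "c < 2 ^ p"
  shows "(\<lambda>x. if x \<in> {1..2 ^ p} then xor (x - 1) c + 1 else x) permutes {1..2 ^ p}"
proof (rule inj_imp_permutes)
  show "(if x \<in> {1..2 ^ p} then xor (x - 1) c + 1 else x) \<in> {1..2 ^ p}"
    if "x \<in> {1..2 ^ p}" for x
    using xor_shift_mem[OF that assms] that by simp
  have "x - 1 = y - 1" if "xor (x - 1) c = xor (y - 1) c" for x y :: nat
    using that by (metis xor.assoc xor_self_eq xor.right_neutral)
  then show "inj_on (\<lambda>x. if x \<in> {1..2 ^ p} then xor (x - 1) c + 1 else x) {1..2 ^ p}"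
    by (intro inj_onI) force
qed auto

theorem perm_sylvester_rows_eq_0:
  assumes "\<forall>k \<in> {1..2 ^ p}. r k \<in> {1..2 ^ p}" and "xor_rows (2 ^ p) r \<noteq> 0"
  shows "perm_mat (2 ^ p) (\<lambda>k j. sylvester p (r k) j) = 0"
proof -
  let ?S = "{1..2 ^ p :: nat}"
  have "xor_rows (2 ^ p) r < 2 ^ p"
    using assms(1) by (intro xor_rows_less_exp) auto
  with assms(2) obtain c where c: "c < 2 ^ p" "walsh p (xor_rows (2 ^ p) r) c = -1"
    by (rule exists_walsh_eq_neg)
  have entry: "sylvester p (r k) j = walsh p (r k - 1) (j - 1)" if "k \<in> ?S" "j \<in> ?S" for k j
  proof -
    have "r k \<in> ?S" using assms(1) that(1) by blast
    then show ?thesis unfolding sylvester_def using that by (intro sylv0_eq_walsh) auto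
  qed
  show ?thesis
  proof (rule perm_mat_eq_0_if_column_permutation_negates[OF xor_shift_permutes[OF c(1)]])
    fix k j assume k: "k \<in> ?S" and j: "j \<in> ?S"
    have "xor (j - 1) c + 1 \<in> ?S" using j c(1) by (rule xor_shift_mem)
    then show "sylvester p (r k) (if j \<in> ?S then xor (j - 1) c + 1 else j)
        = walsh p (r k - 1) c * sylvester p (r k) j"
      using j entry[OF k] entry[OF k j] by (simp add: walsh_xor_right mult.commute)
  next
    show "(\<Prod>k \<in> ?S. walsh p (r k - 1) c) = -1"
      using c(2) by (simp add: walsh_xor_rows)
  qed
qed

theorem corollary3:
  fixes p m :: nat and r :: "nat \<Rightarrow> nat" and i r' :: nat
    and A B :: "nat \<Rightarrow> nat \<Rightarrow> int"
  assumes hm: "m = 2 ^ p" and hm2: "m > 2"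
    and hr: "\<forall>k \<in> {1..m}. r k \<in> {1..m}"
    and hx: "xor_rows m r = 0"
    and hA: "A = (\<lambda>k j. sylvester p (r k) j)"
    and hi: "i \<in> {1..m}"
    and hr': "r' \<in> {1..m}" and hne: "r' \<noteq> r i"
    and hB: "B = (\<lambda>k j. if k = i then sylvester p r' j else A k j)"
  shows "xor_rows m (r(i := r')) \<noteq> 0 \<and> perm_mat m B = 0"
proof
  have "r i \<in> {1..m}" using hr hi by blast
  then have "r i - 1 \<noteq> r' - 1" using hr' hne by auto
  moreover have "xor_rows m (r(i := r')) = xor (r i - 1) (r' - 1)"
    using xor_rows_fun_upd[OF hi, of r r'] hx by simp
  ultimately show nonzero: "xor_rows m (r(i := r')) \<noteq> 0"
    by (metis xor_cancel_left xor.right_neutral)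
  have "B = (\<lambda>k j. sylvester p ((r(i := r')) k) j)"
    unfolding hB hA by (simp add: fun_eq_iff)
  moreover have "\<forall>k \<in> {1..2 ^ p}. (r(i := r')) k \<in> {1..2 ^ p}"
    using hr hr' unfolding hm by simp
  ultimately show "perm_mat m B = 0"
    using perm_sylvester_rows_eq_0[of p "r(i := r')"] nonzero unfolding hm by blast
qed

end
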